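(* Let $a\in K$ and let $b_1,\dots,b_\ell\in K$ be distinct ($\ell\ge1$). Suppose that either $(a,b_i)\in S$ for all $i$, or $(b_i,a)\in S$ for all $i$. Then $\pi\ge\ell(n-2q-m+1)+q-m-1$.
   Context: $G$ is a set of size $n$ and $G(\circ)$, $G(\ast)$ are distinct groups on $G$ with the same identity element. $\mathrm{diff}(\circ,\ast)=\{(a,b):a\circ b\ne a\ast b\}$, $\mathrm{dist}(\circ,\ast)=|\mathrm{diff}(\circ,\ast)|$, $\mathrm{dist}_a=|\{b:a\circ b\ne a\ast b\}|$; $H=\{a:\mathrm{dist}_a=0\}$, $h=|H|$; $K=\{a:\mathrm{dist}_a<n/3\}$, $k=|K|$; $m=\min\{\mathrm{dist}_a:\mathrm{dist}_a>0\}$. Standing assumption: $m\ge 3$. Let $q=\lceil n/3\rceil$ and the profit $\pi=\mathrm{dist}(\circ,\ast)-((k-h)m+(n-k)q)$. Let $S=\{(a,b)\in\mathrm{diff}(\circ,\ast):a,b\in K,\ a\ne b\}$, $s=|S|$. *)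

theory Defs
  imports Complex_Main "HOL-Algebra.Group"
begin

text \<open>Two binary operations f (the paper's circ) and g (the paper's ast) on a carrier set G.\<close>

definition diff_set :: "'a set \<Rightarrow> ('a \<Rightarrow> 'a \<Rightarrow> 'a) \<Rightarrow> ('a \<Rightarrow> 'a \<Rightarrow> 'a) \<Rightarrow> ('a \<times> 'a) set" where
  "diff_set G f g = {(x, y). x \<in> G \<and> y \<in> G \<and> f x y \<noteq> g x y}"

definition dist_ops :: "'a set \<Rightarrow> ('a \<Rightarrow> 'a \<Rightarrow> 'a) \<Rightarrow> ('a \<Rightarrow> 'a \<Rightarrow> 'a) \<Rightarrow> nat" where
  "dist_ops G f g = card (diff_set G f g)"

definition dist_row :: "'a set \<Rightarrow> ('a \<Rightarrow> 'a \<Rightarrow> 'a) \<Rightarrow> ('a \<Rightarrow> 'a \<Rightarrow> 'a) \<Rightarrow> 'a \<Rightarrow> nat" where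
  "dist_row G f g x = card {y \<in> G. f x y \<noteq> g x y}"

definition H_set :: "'a set \<Rightarrow> ('a \<Rightarrow> 'a \<Rightarrow> 'a) \<Rightarrow> ('a \<Rightarrow> 'a \<Rightarrow> 'a) \<Rightarrow> 'a set" where
  "H_set G f g = {x \<in> G. dist_row G f g x = 0}"

definition K_set :: "'a set \<Rightarrow> ('a \<Rightarrow> 'a \<Rightarrow> 'a) \<Rightarrow> ('a \<Rightarrow> 'a \<Rightarrow> 'a) \<Rightarrow> 'a set" where
  "K_set G f g = {x \<in> G. real (dist_row G f g x) < real (card G) / 3}"

definition m_val :: "'a set \<Rightarrow> ('a \<Rightarrow> 'a \<Rightarrow> 'a) \<Rightarrow> ('a \<Rightarrow> 'a \<Rightarrow> 'a) \<Rightarrow> nat" where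
  "m_val G f g = Min {dist_row G f g x | x. x \<in> G \<and> dist_row G f g x > 0}"

definition q_val :: "nat \<Rightarrow> nat" where
  "q_val n = nat \<lceil>real n / 3\<rceil>"

definition profit :: "'a set \<Rightarrow> ('a \<Rightarrow> 'a \<Rightarrow> 'a) \<Rightarrow> ('a \<Rightarrow> 'a \<Rightarrow> 'a) \<Rightarrow> int" where
  "profit G f g = int (dist_ops G f g)
     - ((int (card (K_set G f g)) - int (card (H_set G f g))) * int (m_val G f g)
        + (int (card G) - int (card (K_set G f g))) * int (q_val (card G)))"

definition S_set :: "'a set \<Rightarrow> ('a \<Rightarrow> 'a \<Rightarrow> 'a) \<Rightarrow> ('a \<Rightarrow> 'a \<Rightarrow> 'a) \<Rightarrow> ('a \<times> 'a) set" where
  "S_set G f g = {(x, y) \<in> diff_set G f g. x \<in> K_set G f g \<and> y \<in> K_set G f g \<and> x \<noteq> y}"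

end

theory Submission
  imports Defs
begin

text \<open>
  Write \<open>d x\<close> for the number of columns in which row \<open>x\<close> of the two multiplication tables
  differs. The profit is the sum over all rows of \<open>d x\<close> minus a charge (\<open>m\<close> on \<open>K - H\<close>,
  \<open>q\<close> outside \<open>K\<close>), and every such row weight is nonnegative.
  If \<open>a \<circ> b \<noteq> a \<ast> b\<close>, then every column \<open>y\<close> is a difference in one of the rows
  \<open>a \<circ> b\<close>, \<open>a\<close>, \<open>b\<close>: otherwise \<open>(a \<circ> b) \<ast> y = (a \<ast> b) \<ast> y\<close> and cancellation gives
  \<open>a \<circ> b = a \<ast> b\<close>. So \<open>n \<le> d (a \<circ> b) + d a + d b\<close>, and for \<open>a, b \<in> K\<close> the product
  lies outside \<open>K\<close>. The \<open>l\<close> distinct products \<open>c\<^sub>i = a \<circ> b\<^sub>i\<close> (or \<open>b\<^sub>i \<circ> a\<close>) are thus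
  outside \<open>K\<close>, and the weights of \<open>a\<close>, the \<open>b\<^sub>i\<close> and the \<open>c\<^sub>i\<close> alone give
  \<open>\<pi> \<ge> d a - m + l (n - d a - m - q)\<close>, which exceeds the claimed bound by
  \<open>(l - 1)(q - d a - 1) \<ge> 0\<close>.
\<close>

lemma card_le_dist_row_mult:
  assumes fin: "finite G"
    and "group \<lparr>carrier = G, mult = f, one = e\<rparr>" and "group \<lparr>carrier = G, mult = g, one = e'\<rparr>"
    and a: "a \<in> G" and b: "b \<in> G" and ne: "f a b \<noteq> g a b"
  shows "card G \<le> dist_row G f g (f a b) + dist_row G f g a + dist_row G f g b"
proof -
  interpret F: group "\<lparr>carrier = G, mult = f, one = e\<rparr>" by fact
  interpret Gr: group "\<lparr>carrier = G, mult = g, one = e'\<rparr>" by fact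
  define R where "R = (\<lambda>x. {y \<in> G. f x y \<noteq> g x y})"
  define Ra where "Ra = {x \<in> G. f b x \<in> R a}"
  have "G \<subseteq> R (f a b) \<union> Ra \<union> R b"
  proof
    fix x assume x: "x \<in> G"
    show "x \<in> R (f a b) \<union> Ra \<union> R b"
    proof (rule ccontr)
      assume "x \<notin> R (f a b) \<union> Ra \<union> R b"
      then have "f (f a b) x = g (f a b) x" "f a (f b x) = g a (f b x)" "f b x = g b x"
        using x F.m_closed[of b x] b unfolding R_def Ra_def by auto
      then have "g (f a b) x = g (g a b) x"
        using x a b F.m_assoc[of a b x] Gr.m_assoc[of a b x] by simp
      then show False
        using ne x a b F.m_closed[of a b] Gr.m_closed[of a b] Gr.right_cancel[of x "f a b" "g a b"] by simp
    qed
  qed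
  then have "card G \<le> card (R (f a b) \<union> Ra \<union> R b)"
    using fin by (intro card_mono) (auto simp: R_def Ra_def)
  also have "\<dots> \<le> card (R (f a b)) + card Ra + card (R b)"
    using card_Un_le[of "R (f a b) \<union> Ra" "R b"] card_Un_le[of "R (f a b)" Ra] by linarith
  also have "\<dots> \<le> card (R (f a b)) + card (R a) + card (R b)"
    using F.inj_on_cmult[of b] b fin
    by (simp, intro card_inj_on_le[where f = "f b"]) (auto simp: R_def Ra_def inj_on_def)
  finally show ?thesis
    unfolding dist_row_def R_def .
qed

lemma dist_ops_eq_sum_dist_row:
  assumes "finite G"
  shows "dist_ops G f g = (\<Sum>x\<in>G. dist_row G f g x)"
proof -
  have "diff_set G f g = (SIGMA x:G. {y \<in> G. f x y \<noteq> g x y})"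
    unfolding diff_set_def by auto
  then show ?thesis
    unfolding dist_ops_def dist_row_def using assms by simp
qed

lemma H_set_subset_K_set:
  assumes "finite G" "G \<noteq> {}"
  shows "H_set G f g \<subseteq> K_set G f g"
  using assms unfolding H_set_def K_set_def by (auto simp: card_gt_0_iff)

lemma K_set_subset: "K_set G f g \<subseteq> G"
  unfolding K_set_def by auto

definition profit_weight :: "'a set \<Rightarrow> ('a \<Rightarrow> 'a \<Rightarrow> 'a) \<Rightarrow> ('a \<Rightarrow> 'a \<Rightarrow> 'a) \<Rightarrow> 'a \<Rightarrow> int" where
  "profit_weight G f g x =
     (if x \<in> H_set G f g then 0
      else if x \<in> K_set G f g then int (dist_row G f g x) - int (m_val G f g)
      else int (dist_row G f g x) - int (q_val (card G)))"

lemma profit_eq_sum_profit_weight: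
  assumes fin: "finite G" and "G \<noteq> {}"
  shows "profit G f g = (\<Sum>x\<in>G. profit_weight G f g x)"
proof -
  define d where "d = dist_row G f g"
  define H where "H = H_set G f g"
  define K where "K = K_set G f g"
  define m where "m = int (m_val G f g)"
  define q where "q = int (q_val (card G))"
  have HK: "H \<subseteq> K" and KG: "K \<subseteq> G"
    unfolding H_def K_def by (rule H_set_subset_K_set[OF assms], rule K_set_subset)
  have "\<And>x. x \<in> G \<Longrightarrow> profit_weight G f g x
      = int (d x) - (m * of_bool (x \<in> K - H) + q * of_bool (x \<notin> K))"
    using HK unfolding profit_weight_def d_def H_def K_def m_def q_def
    by (auto simp: H_set_def)
  moreover have "G \<inter> (K - H) = K - H" "G \<inter> {x. x \<notin> K} = G - K"
    using KG by auto
  ultimately have "(\<Sum>x\<in>G. profit_weight G f g x)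
      = (\<Sum>x\<in>G. int (d x)) - (m * card (K - H) + q * card (G - K))"
    using fin by (simp add: sum_subtractf sum.distrib sum_distrib_left[symmetric] flip: set_diff_eq)
  also have "\<dots> = profit G f g"
    using HK KG fin
    by (simp add: profit_def dist_ops_eq_sum_dist_row[OF fin] d_def H_def K_def m_def q_def
        card_Diff_subset finite_subset card_mono of_nat_diff algebra_simps)
  finally show ?thesis ..
qed

lemma dist_row_less_q_val:
  assumes "x \<in> K_set G f g"
  shows "dist_row G f g x < q_val (card G)"
proof -
  have "real (dist_row G f g x) < real (card G) / 3"
    using assms unfolding K_set_def by auto
  also have "\<dots> \<le> real (q_val (card G))"
    unfolding q_val_def by linarith
  finally show ?thesis by simp
qed

lemma q_val_le_dist_row:
  assumes "x \<in> G" "x \<notin> K_set G f g"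
  shows "q_val (card G) \<le> dist_row G f g x"
  using assms unfolding K_set_def q_val_def by (simp add: ceiling_le_iff nat_le_iff)

lemma m_val_le_dist_row:
  assumes "finite G" "x \<in> G" "0 < dist_row G f g x"
  shows "m_val G f g \<le> dist_row G f g x"
  unfolding m_val_def using assms by (intro Min_le) auto

lemma profit_weight_nonneg:
  assumes "finite G" "x \<in> G"
  shows "0 \<le> profit_weight G f g x"
  using assms m_val_le_dist_row[OF assms] q_val_le_dist_row[OF assms(2)]
  unfolding profit_weight_def H_set_def by auto

lemma profit_weight_ge_K_set:
  assumes "x \<in> K_set G f g"
  shows "int (dist_row G f g x) - int (m_val G f g) \<le> profit_weight G f g x"
  using assms unfolding profit_weight_def H_set_def by auto

lemma profit_weight_not_K_set:
  assumes "finite G" "x \<in> G" "x \<notin> K_set G f g"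
  shows "profit_weight G f g x = int (dist_row G f g x) - int (q_val (card G))"
  using assms H_set_subset_K_set[of G f g] unfolding profit_weight_def by auto

lemma sum_profit_weight_le_profit:
  assumes "finite G" "T \<subseteq> G"
  shows "(\<Sum>x\<in>T. profit_weight G f g x) \<le> profit G f g"
proof (cases "G = {}")
  case False
  have "(\<Sum>x\<in>T. profit_weight G f g x) \<le> (\<Sum>x\<in>G. profit_weight G f g x)"
    using assms profit_weight_nonneg[OF assms(1)] by (intro sum_mono2) auto
  then show ?thesis
    using profit_eq_sum_profit_weight[OF assms(1) False] by simp
qed (use assms in \<open>simp add: profit_def dist_ops_def diff_set_def K_set_def H_set_def\<close>)

lemma profit_ge_partner_bound:
  fixes b c :: "'i \<Rightarrow> 'a"
  assumes fin: "finite G" "finite I"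
    and a: "a \<in> K_set G f g" and aB: "a \<notin> b ` I"
    and b: "inj_on b I" "b ` I \<subseteq> K_set G f g"
    and c: "inj_on c I" "c ` I \<subseteq> G"
    and partner: "\<forall>i\<in>I. card G \<le> dist_row G f g (c i) + dist_row G f g a + dist_row G f g (b i)"
  shows "int (dist_row G f g a) - int (m_val G f g)
           + int (card I) * (int (card G) - int (dist_row G f g a) - int (m_val G f g)
                             - int (q_val (card G)))
         \<le> profit G f g"
proof -
  let ?d = "\<lambda>x. int (dist_row G f g x)" and ?w = "profit_weight G f g"
    and ?m = "int (m_val G f g)" and ?q = "int (q_val (card G))"
  have cK: "c i \<notin> K_set G f g" if i: "i \<in> I" for i
  proof
    assume ci: "c i \<in> K_set G f g"
    have lt: "real (dist_row G f g x) < real (card G) / 3" if "x \<in> K_set G f g" for x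
      using that unfolding K_set_def by auto
    have "real (card G) \<le> real (dist_row G f g (c i)) + real (dist_row G f g a)
        + real (dist_row G f g (b i))"
      using partner i by (simp flip: of_nat_add)
    then show False
      using lt[OF ci] lt[OF a] lt[of "b i"] b(2) i by auto
  qed
  have disj: "a \<notin> b ` I \<union> c ` I" "b ` I \<inter> c ` I = {}"
    using aB a cK b(2) by auto
  have "?w a + (\<Sum>i\<in>I. ?w (b i) + ?w (c i)) = (\<Sum>x\<in>insert a (b ` I \<union> c ` I). ?w x)"
    using fin disj b(1) c(1) by (simp add: sum.union_disjoint sum.reindex sum.distrib)
  also have "\<dots> \<le> profit G f g"
    using a b(2) c(2) K_set_subset[of G f g] by (intro sum_profit_weight_le_profit[OF fin(1)]) auto
  finally have "?w a + (\<Sum>i\<in>I. ?w (b i) + ?w (c i)) \<le> profit G f g" .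
  moreover have "?d a - ?m \<le> ?w a"
    using a by (rule profit_weight_ge_K_set)
  moreover have "(\<Sum>i\<in>I. int (card G) - ?d a - ?m - ?q) \<le> (\<Sum>i\<in>I. ?w (b i) + ?w (c i))"
  proof (rule sum_mono)
    fix i assume i: "i \<in> I"
    have "?d (b i) - ?m \<le> ?w (b i)"
      using i b(2) by (intro profit_weight_ge_K_set) auto
    moreover have "?w (c i) = ?d (c i) - ?q"
      using i c(2) cK fin by (intro profit_weight_not_K_set) auto
    ultimately show "int (card G) - ?d a - ?m - ?q \<le> ?w (b i) + ?w (c i)"
      using bspec[OF partner i] by linarith
  qed
  ultimately show ?thesis by simp
qed

lemma obtain_mult_partners:
  fixes b :: "'i \<Rightarrow> 'a"
  assumes fin: "finite G"
    and gf: "group \<lparr>carrier = G, mult = f, one = e\<rparr>" and gg: "group \<lparr>carrier = G, mult = g, one = e'\<rparr>"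
    and a: "a \<in> G" and b: "inj_on b I" "b ` I \<subseteq> G"
    and diff: "(\<forall>i\<in>I. (a, b i) \<in> diff_set G f g) \<or> (\<forall>i\<in>I. (b i, a) \<in> diff_set G f g)"
  obtains c where "inj_on c I" "c ` I \<subseteq> G"
    "\<forall>i\<in>I. card G \<le> dist_row G f g (c i) + dist_row G f g a + dist_row G f g (b i)"
proof -
  interpret group "\<lparr>carrier = G, mult = f, one = e\<rparr>" by fact
  have closed: "f x y \<in> G" if "x \<in> G" "y \<in> G" for x y
    using m_closed that by simp
  have inj: "inj_on (\<lambda>x. f a x) G" "inj_on (\<lambda>x. f x a) G"
    using inj_on_cmult[of a] inj_on_multc[of a] a by simp_all
  from diff show thesis
  proof
    assume "\<forall>i\<in>I. (a, b i) \<in> diff_set G f g"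
    then show thesis
      using card_le_dist_row_mult[OF fin gf gg a] b closed[OF a]
        comp_inj_on[OF b(1) inj_on_subset[OF inj(1) b(2)]]
      by (intro that[of "\<lambda>i. f a (b i)"]) (auto simp: diff_set_def comp_def)
  next
    assume "\<forall>i\<in>I. (b i, a) \<in> diff_set G f g"
    then show thesis
      using card_le_dist_row_mult[OF fin gf gg _ a] b closed[OF _ a]
        comp_inj_on[OF b(1) inj_on_subset[OF inj(2) b(2)]]
      by (intro that[of "\<lambda>i. f (b i) a"]) (fastforce simp: diff_set_def comp_def)+
  qed
qed

theorem lemma9p4:
  fixes G :: "'a set" and f g :: "'a \<Rightarrow> 'a \<Rightarrow> 'a" and e :: 'a and n :: nat
    and a :: 'a and b :: "nat \<Rightarrow> 'a" and l :: nat
  assumes "finite G" and "card G = n"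
    and "group \<lparr>carrier = G, mult = f, one = e\<rparr>"
    and "group \<lparr>carrier = G, mult = g, one = e\<rparr>"
    and "\<exists>x\<in>G. \<exists>y\<in>G. f x y \<noteq> g x y"
    and "m_val G f g \<ge> 3"
    and "a \<in> K_set G f g"
    and "l \<ge> 1"
    and "\<forall>i\<in>{1..l}. b i \<in> K_set G f g"
    and "inj_on b {1..l}"
    and "(\<forall>i\<in>{1..l}. (a, b i) \<in> S_set G f g) \<or> (\<forall>i\<in>{1..l}. (b i, a) \<in> S_set G f g)"
  shows "profit G f g \<ge> int l * (int n - 2 * int (q_val n) - int (m_val G f g) + 1)
                          + int (q_val n) - int (m_val G f g) - 1"
proof -
  let ?d = "int (dist_row G f g a)" and ?m = "int (m_val G f g)" and ?q = "int (q_val n)"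
  have aG: "a \<in> G" and bK: "b ` {1..l} \<subseteq> K_set G f g"
    using assms(7,9) K_set_subset[of G f g] by auto
  have aB: "a \<notin> b ` {1..l}"
    and diff: "(\<forall>i\<in>{1..l}. (a, b i) \<in> diff_set G f g) \<or> (\<forall>i\<in>{1..l}. (b i, a) \<in> diff_set G f g)"
    using assms(11) unfolding S_set_def by auto
  obtain c where "inj_on c {1..l}" "c ` {1..l} \<subseteq> G"
    "\<forall>i\<in>{1..l}. card G \<le> dist_row G f g (c i) + dist_row G f g a + dist_row G f g (b i)"
    using obtain_mult_partners[OF assms(1,3,4) aG assms(10)] bK K_set_subset[of G f g] diff by blast
  then have "?d - ?m + int l * (int n - ?d - ?m - ?q) \<le> profit G f g"
    using profit_ge_partner_bound[OF assms(1) _ assms(7) aB assms(10) bK] assms(2) by simp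
  moreover have "0 \<le> (int l - 1) * (?q - ?d - 1)"
    using dist_row_less_q_val[OF assms(7)] assms(2,8) by simp
  ultimately show ?thesis
    by (simp add: algebra_simps)
qed

end
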